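(* Let $k\ge2$ and $\ell\ge1$. Then $D_k(\ell)\ge (k+1)k^{\ell/2-1}-1$ if $\ell$ is even, and $D_k(\ell)\ge 2k^{(\ell-1)/2}-1$ if $\ell$ is odd.
   Context: Labeled chip-firing on the infinite rooted directed $k$-ary tree (each vertex has $k$ children ordered left to right, root on layer $1$): a vertex with at least $k$ chips may fire by choosing any $k$ of its chips and sending the $i$-th smallest label among them to its $i$-th leftmost child; a configuration is stable when no vertex has $\ge k$ chips. Starting with $k^\ell$ chips labeled $1,\dots,k^\ell$ at the root, every stable configuration has exactly one chip on each vertex of layer $\ell+1$ and none elsewhere, and is identified with the permutation of labels read left to right on layer $\ell+1$. $D_k(\ell)$ denotes the maximum, over all reachable stable configurations, of the length of the longest strictly decreasing subsequence of the corresponding permutation. *)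

theory Defs
  imports Main
begin

(* Vertices of the infinite rooted k-ary tree are lists of child indices (each < k);
   the root is [], and a vertex w lies on layer (length w + 1).
   The i-th leftmost child of v (0-based i < k) is v @ [i].
   A labeled configuration assigns to each vertex the (finite) set of labels of its chips. *)

type_synonym vertex = "nat list"
type_synonym config = "vertex \<Rightarrow> nat set"

definition is_vertex :: "nat \<Rightarrow> vertex \<Rightarrow> bool" where
  "is_vertex k w \<longleftrightarrow> (\<forall>x\<in>set w. x < k)"

(* One firing move: vertex v fires k of its chips, the set S; the i-th smallest label
   (0-based i) goes to the i-th leftmost child v @ [i]. *)
definition fire :: "nat \<Rightarrow> config \<Rightarrow> config \<Rightarrow> bool" where
  "fire k C C' \<longleftrightarrow>
     (\<exists>v S. is_vertex k v \<and> S \<subseteq> C v \<and> finite S \<and> card S = k \<and>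
        C' = (\<lambda>w. if w = v then C v - S
                   else if (\<exists>i<k. w = v @ [i])
                        then insert (sorted_list_of_set S ! last w) (C w)
                   else C w))"

definition init_config :: "nat \<Rightarrow> nat \<Rightarrow> config" where
  "init_config k l = (\<lambda>w. if w = [] then {1..k ^ l} else {})"

definition reachable :: "nat \<Rightarrow> nat \<Rightarrow> config \<Rightarrow> bool" where
  "reachable k l C \<longleftrightarrow> (fire k)\<^sup>*\<^sup>* (init_config k l) C"

definition stable :: "nat \<Rightarrow> config \<Rightarrow> bool" where
  "stable k C \<longleftrightarrow> (\<forall>v. is_vertex k v \<longrightarrow> finite (C v) \<and> card (C v) < k)"

(* The j-th vertex (0-based, left to right) of layer l+1: base-k digits of j,
   most significant first, of length l. *)
definition layer_vertex :: "nat \<Rightarrow> nat \<Rightarrow> nat \<Rightarrow> vertex" where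
  "layer_vertex k l j = map (\<lambda>i. j div k ^ (l - 1 - i) mod k) [0..<l]"

(* The permutation read left to right on layer l+1 (positions 0..k^l-1). *)
definition perm_of :: "nat \<Rightarrow> nat \<Rightarrow> config \<Rightarrow> nat \<Rightarrow> nat" where
  "perm_of k l C j = the_elem (C (layer_vertex k l j))"

definition lds :: "nat \<Rightarrow> (nat \<Rightarrow> nat) \<Rightarrow> nat" where
  "lds n s = Max {card I | I. I \<subseteq> {..<n} \<and> (\<forall>i\<in>I. \<forall>j\<in>I. i < j \<longrightarrow> s j < s i)}"

definition D :: "nat \<Rightarrow> nat \<Rightarrow> nat" where
  "D k l = Max {lds (k ^ l) (perm_of k l C) | C. reachable k l C \<and> stable k C}"

end

theory Submission
  imports Defs
begin

text \<open>
  Firing the vertex holding the labels \<open>c + s*y\<close>, \<open>y < k^(m+1)\<close>, always on \<open>k\<close> consecutive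
  labels of the progression, gives child \<open>i\<close> the progression \<open>c + s*i + s*k*y\<close>, \<open>y < k^m\<close>;
  recursing into every child, the leaf with base-\<open>k\<close> digits \<open>w\<close> ends up with label
  \<open>c + s * value (rev w)\<close>. So starting from the root, the stable configuration reached is the
  digit-reversal permutation, and a decreasing subsequence of it is a set of digit words on
  which reversal reverses the numeric order. If \<open>T\<close> is such a set of words of length \<open>l\<close>,
  the words \<open>a x (k-1-a)\<close> with \<open>x \<in> T\<close>, \<open>a < k\<close>, together with the \<open>k - 1\<close> words
  \<open>(a+1) 0\<dots>0 (k-1-a)\<close>, form one of length \<open>l + 2\<close>. Its size \<open>f\<close> satisfies
  \<open>f(l+2) = k f(l) + k - 1\<close> with \<open>f(1) = 1\<close>, \<open>f(2) = k\<close>, which solves to the stated bounds.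
\<close>

fun of_digits :: "nat \<Rightarrow> nat list \<Rightarrow> nat" where
  "of_digits k [] = 0"
| "of_digits k (d # w) = d * k ^ length w + of_digits k w"

lemma of_digits_snoc: "of_digits k (w @ [b]) = k * of_digits k w + b"
  by (induction w) (auto simp: algebra_simps)

lemma of_digits_replicate_0: "of_digits k (replicate n 0) = 0"
  by (induction n) auto

lemma of_digits_less:
  assumes "is_vertex k w"
  shows "of_digits k w < k ^ length w"
  using assms
proof (induction w)
  case (Cons d w)
  then have IH: "of_digits k w < k ^ length w" and d: "d < k"
    by (auto simp: is_vertex_def)
  have "d * k ^ length w + of_digits k w < (d + 1) * k ^ length w"
    using IH by simp
  also have "\<dots> \<le> k * k ^ length w"
    using d by (intro mult_le_mono1) simp
  finally show ?case by simp
qed simp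

lemma nth_layer_vertex: "i < l \<Longrightarrow> layer_vertex k l j ! i = j div k ^ (l - 1 - i) mod k"
  by (simp add: layer_vertex_def)

lemma length_layer_vertex [simp]: "length (layer_vertex k l j) = l"
  by (simp add: layer_vertex_def)

lemma layer_vertex_of_digits:
  assumes "is_vertex k w"
  shows "layer_vertex k (length w) (of_digits k w) = w"
  using assms
proof (induction w)
  case Nil
  then show ?case by (simp add: layer_vertex_def)
next
  case (Cons d w)
  then have IH: "layer_vertex k (length w) (of_digits k w) = w" and d: "d < k"
    and small: "of_digits k w < k ^ length w"
    using of_digits_less by (auto simp: is_vertex_def)
  have "layer_vertex k (Suc (length w)) (of_digits k (d # w)) ! i = (d # w) ! i"
    if i: "i < Suc (length w)" for i
  proof (cases i)
    case 0
    have "(d * k ^ length w + of_digits k w) div k ^ length w = d"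
      using small d by simp
    then show ?thesis using 0 d by (simp add: nth_layer_vertex)
  next
    case (Suc i')
    define p where "p = length w - 1 - i'"
    have i': "i' < length w" using i Suc by simp
    have "length w = Suc i' + p" unfolding p_def using i' by simp
    then have "k ^ length w = k ^ Suc i' * k ^ p" by (metis power_add)
    then have "d * k ^ length w + of_digits k w = of_digits k w + (d * k ^ Suc i') * k ^ p"
      by simp
    then have "(d * k ^ length w + of_digits k w) div k ^ p
        = d * k ^ Suc i' + of_digits k w div k ^ p"
      by (simp only:) (rule div_mult_self1, use d in simp)
    then have "(d * k ^ length w + of_digits k w) div k ^ p mod k = of_digits k w div k ^ p mod k"
      by (simp add: mod_add_left_eq[symmetric])
    moreover have "w ! i' = of_digits k w div k ^ p mod k"
      using IH i' nth_layer_vertex[of i' "length w" k "of_digits k w"] p_def by simp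
    ultimately show ?thesis using Suc i' by (simp add: nth_layer_vertex p_def)
  qed
  then show ?case by (intro nth_equalityI) auto
qed

lemma rtranclp_chain:
  assumes "\<And>j. j < n \<Longrightarrow> R (f j) (f (Suc j))"
  shows "R\<^sup>*\<^sup>* (f 0) (f n)"
  using assms by (induction n) (auto intro: rtranclp.rtrancl_into_rtrancl)

lemma nth_sorted_list_of_set_image_lessThan:
  assumes "strict_mono_on {..<n} f" and "i < n"
  shows "sorted_list_of_set (f ` {..<n}) ! i = f i"
proof -
  define xs where "xs = map f [0..<n]"
  have "sorted_wrt (<) xs"
    using assms(1) by (auto simp: xs_def sorted_wrt_iff_nth_less strict_mono_on_def)
  then have "sorted_list_of_set (set xs) = xs"
    by (simp add: strict_sorted_iff sorted_list_of_set_sort_remdups distinct_remdups_id sorted_sort_id)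
  moreover have "set xs = f ` {..<n}"
    by (auto simp: xs_def)
  ultimately show ?thesis
    using assms(2) by (simp add: xs_def)
qed

subsection \<open>A firing strategy producing the digit-reversal permutation\<close>

text \<open>
  The configurations below describe a vertex \<open>v\<close> that holds the labels \<open>c + s*y\<close>,
  \<open>y < k^(m+1)\<close>, with nothing strictly below it. In \<open>fire_blocks\<close>, \<open>v\<close> has fired its
  \<open>j\<close> lowest blocks of \<open>k\<close> consecutive labels; in \<open>reversal_upto_child\<close>, all of these
  firings are done and the subtrees of the children \<open>v @ [a]\<close>, \<open>a < i\<close>, are fully resolved.
\<close>

definition fire_blocks :: "nat \<Rightarrow> nat \<Rightarrow> vertex \<Rightarrow> nat \<Rightarrow> nat \<Rightarrow> config \<Rightarrow> nat \<Rightarrow> config" where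
  "fire_blocks k m v c s C j = (\<lambda>w.
     if w = v then (\<lambda>y. c + s * y) ` {j * k..<k ^ Suc m}
     else if (\<exists>i<k. w = v @ [i]) then (\<lambda>y. c + s * (last w + k * y)) ` {..<j}
     else C w)"

definition reversal_config :: "nat \<Rightarrow> nat \<Rightarrow> vertex \<Rightarrow> nat \<Rightarrow> nat \<Rightarrow> config \<Rightarrow> config" where
  "reversal_config k m v c s C = (\<lambda>w.
     if take (length v) w = v then
       (if length (drop (length v) w) = m \<and> is_vertex k (drop (length v) w)
        then {c + s * of_digits k (rev (drop (length v) w))} else {})
     else C w)"

definition reversal_upto_child ::
    "nat \<Rightarrow> nat \<Rightarrow> vertex \<Rightarrow> nat \<Rightarrow> nat \<Rightarrow> config \<Rightarrow> nat \<Rightarrow> config" where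
  "reversal_upto_child k m v c s C i = (\<lambda>w.
     if take (length v) w = v then
       (case drop (length v) w of
          [] \<Rightarrow> {}
        | a # u \<Rightarrow>
            if a < i then
              (if length u = m \<and> is_vertex k u then {c + s * (a + k * of_digits k (rev u))} else {})
            else if a < k \<and> u = [] then (\<lambda>y. c + s * a + s * k * y) ` {..<k ^ m}
            else {})
     else C w)"

lemma prefix_cases:
  obtains u where "w = v @ u" | "take (length v) w \<noteq> v"
  by (metis append_take_drop_id)

lemma fire_blocks_step:
  assumes k: "k > 0" and v: "is_vertex k v" and s: "s > 0" and j: "j < k ^ m"
  shows "fire k (fire_blocks k m v c s C j) (fire_blocks k m v c s C (Suc j))"
proof -
  define S where "S = (\<lambda>i. c + s * (j * k + i)) ` {..<k}"
  have "j * k + k \<le> k ^ Suc m"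
    using j by (metis Suc_leI add.commute mult.commute mult_Suc_right mult_le_mono2 power_Suc)
  then have S_sub: "S \<subseteq> fire_blocks k m v c s C j v"
    unfolding S_def fire_blocks_def by force
  have card_S: "card S = k"
    unfolding S_def using s by (subst card_image) (auto simp: inj_on_def)
  have S_nth: "sorted_list_of_set S ! i = c + s * (j * k + i)" if "i < k" for i
    unfolding S_def using s that
    by (intro nth_sorted_list_of_set_image_lessThan) (auto simp: strict_mono_on_def)
  have remaining: "(\<lambda>y. c + s * y) ` {Suc j * k..<k ^ Suc m} = (\<lambda>y. c + s * y) ` {j * k..<k ^ Suc m} - S"
  proof (intro equalityI subsetI)
    fix x assume x: "x \<in> (\<lambda>y. c + s * y) ` {j * k..<k ^ Suc m} - S"
    then obtain y where "x = c + s * y" "y \<in> {j * k..<k ^ Suc m}"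
      by blast
    then have y: "x = c + s * y" "j * k \<le> y" "y < k ^ Suc m"
      by auto
    have "\<not> y < j * k + k"
      using x y unfolding S_def by (auto intro!: image_eqI[of _ _ "y - j * k"])
    then show "x \<in> (\<lambda>y. c + s * y) ` {Suc j * k..<k ^ Suc m}"
      using y by auto
  qed (use s in \<open>auto simp: S_def\<close>)
  have new_child: "(\<lambda>y. c + s * (i + k * y)) ` {..<Suc j}
      = insert (c + s * (j * k + i)) ((\<lambda>y. c + s * (i + k * y)) ` {..<j})" for i
    by (simp add: lessThan_Suc algebra_simps)
  have "fire_blocks k m v c s C (Suc j) = (\<lambda>w.
      if w = v then fire_blocks k m v c s C j v - S
      else if (\<exists>i<k. w = v @ [i])
           then insert (sorted_list_of_set S ! last w) (fire_blocks k m v c s C j w)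
      else fire_blocks k m v c s C j w)"
    using remaining new_child S_nth by (auto simp: fire_blocks_def fun_eq_iff)
  then show ?thesis
    unfolding fire_def using v S_sub card_S by (intro exI[of _ v] exI[of _ S]) (auto simp: S_def)
qed

lemma fire_blocks_reachable:
  assumes k: "k > 0" and v: "is_vertex k v" and s: "s > 0"
    and at_v: "C v = (\<lambda>y. c + s * y) ` {..<k ^ Suc m}"
    and below_v: "\<And>u. u \<noteq> [] \<Longrightarrow> C (v @ u) = {}"
  shows "(fire k)\<^sup>*\<^sup>* C (fire_blocks k m v c s C (k ^ m))"
proof -
  have "fire_blocks k m v c s C 0 = C"
    using at_v below_v by (auto simp: fire_blocks_def lessThan_atLeast0 fun_eq_iff)
  then show ?thesis
    using rtranclp_chain[of "k ^ m" "fire k" "fire_blocks k m v c s C"] fire_blocks_step[OF k v s]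
    by simp
qed

lemma reversal_upto_child_0:
  assumes below_v: "\<And>u. u \<noteq> [] \<Longrightarrow> C (v @ u) = {}"
  shows "reversal_upto_child k m v c s C 0 = fire_blocks k m v c s C (k ^ m)"
proof
  fix w
  show "reversal_upto_child k m v c s C 0 w = fire_blocks k m v c s C (k ^ m) w"
  proof (cases w v rule: prefix_cases)
    case (1 u)
    show ?thesis
    proof (cases u)
      case (Cons a u')
      then show ?thesis
        using 1 below_v[of u]
        by (cases "a < k \<and> u' = []")
           (auto simp: reversal_upto_child_def fire_blocks_def algebra_simps)
    qed (simp add: 1 reversal_upto_child_def fire_blocks_def)
  next
    case 2
    then have "w \<noteq> v" "\<forall>i. w \<noteq> v @ [i]" by auto
    with 2 show ?thesis by (simp add: reversal_upto_child_def fire_blocks_def)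
  qed
qed

lemma reversal_config_child:
  "reversal_config k m (v @ [i]) (c + s * i) (s * k) (reversal_upto_child k m v c s C i)
     = reversal_upto_child k m v c s C (Suc i)"
proof
  fix w
  show "reversal_config k m (v @ [i]) (c + s * i) (s * k) (reversal_upto_child k m v c s C i) w
      = reversal_upto_child k m v c s C (Suc i) w"
  proof (cases w "v @ [i]" rule: prefix_cases)
    case 1
    then show ?thesis
      by (auto simp: reversal_config_def reversal_upto_child_def algebra_simps)
  next
    case not_child: 2
    show ?thesis
    proof (cases w v rule: prefix_cases)
      case (1 u)
      with not_child show ?thesis
        by (cases u) (auto simp: reversal_config_def reversal_upto_child_def)
    next
      case 2
      with not_child show ?thesis
        by (simp add: reversal_config_def reversal_upto_child_def)
    qed
  qed
qed

lemma reversal_upto_all_children: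
  "reversal_upto_child k m v c s C k = reversal_config k (Suc m) v c s C"
proof
  fix w
  show "reversal_upto_child k m v c s C k w = reversal_config k (Suc m) v c s C w"
  proof (cases w v rule: prefix_cases)
    case (1 u)
    then show ?thesis
      by (cases u)
         (auto simp: reversal_config_def reversal_upto_child_def is_vertex_def of_digits_snoc
           algebra_simps)
  next
    case 2
    then show ?thesis by (simp add: reversal_config_def reversal_upto_child_def)
  qed
qed

lemma reversal_config_reachable:
  assumes "k > 0" and "is_vertex k v" and "s > 0"
    and "C v = (\<lambda>y. c + s * y) ` {..<k ^ m}"
    and "\<And>u. u \<noteq> [] \<Longrightarrow> C (v @ u) = {}"
  shows "(fire k)\<^sup>*\<^sup>* C (reversal_config k m v c s C)"
  using assms
proof (induction m arbitrary: v c s C)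
  case 0
  have "reversal_config k 0 v c s C = C"
  proof
    fix w
    show "reversal_config k 0 v c s C w = C w"
    proof (cases w v rule: prefix_cases)
      case (1 u)
      then show ?thesis
        using 0 by (cases u) (auto simp: reversal_config_def is_vertex_def)
    next
      case 2
      then show ?thesis by (simp add: reversal_config_def)
    qed
  qed
  then show ?case by simp
next
  case (Suc m)
  note k = \<open>k > 0\<close> and v = \<open>is_vertex k v\<close> and s = \<open>s > 0\<close>
  let ?R = "reversal_upto_child k m v c s C"
  have "(fire k)\<^sup>*\<^sup>* (?R i) (?R (Suc i))" if i: "i < k" for i
  proof -
    have "is_vertex k (v @ [i])"
      using v i by (auto simp: is_vertex_def)
    moreover have "?R i (v @ [i]) = (\<lambda>y. c + s * i + s * k * y) ` {..<k ^ m}"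
      using i by (simp add: reversal_upto_child_def)
    moreover have "?R i ((v @ [i]) @ u) = {}" if "u \<noteq> []" for u
      using that by (simp add: reversal_upto_child_def)
    ultimately have "(fire k)\<^sup>*\<^sup>* (?R i) (reversal_config k m (v @ [i]) (c + s * i) (s * k) (?R i))"
      using Suc.IH[of "v @ [i]" "s * k" "?R i" "c + s * i"] k s by simp
    then show ?thesis
      by (simp add: reversal_config_child)
  qed
  then have "(fire k)\<^sup>*\<^sup>* (?R 0) (?R k)"
    using rtranclp_chain[of k "(fire k)\<^sup>*\<^sup>*" ?R] by (simp add: rtranclp_idemp)
  then show ?case
    using fire_blocks_reachable[OF k v s Suc.prems(4,5)] reversal_upto_child_0[of C v k m c s, OF Suc.prems(5)]
      reversal_upto_all_children[of k m v c s C]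
    by (metis rtranclp_trans)
qed

subsection \<open>Sets of words on which digit reversal reverses the order\<close>

lemma lex_mult_add_less_iff:
  fixes r r' K :: nat
  assumes "r < K" and "r' < K"
  shows "a * K + r < a' * K + r' \<longleftrightarrow> a < a' \<or> a = a' \<and> r < r'"
proof (cases a a' rule: linorder_cases)
  case less
  then have "(a + 1) * K \<le> a' * K" by (intro mult_le_mono1) simp
  with assms show ?thesis using less by simp
next
  case greater
  then have "(a' + 1) * K \<le> a * K" by (intro mult_le_mono1) simp
  with assms show ?thesis using greater by simp
qed simp

lemma mult_add_less_power:
  fixes x b k :: nat
  assumes "x < k ^ l" and "b < k"
  shows "k * x + b < k ^ Suc l"
proof -
  have "k * x + b < k * (x + 1)" using assms(2) by simp
  also have "\<dots> \<le> k * k ^ l" using assms(1) by (intro mult_le_mono2) simp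
  finally show ?thesis by simp
qed

lemma of_digits_wrap:
  "of_digits k (a # w @ [b]) = a * k ^ Suc (length w) + (k * of_digits k w + b)"
  by (simp add: of_digits_snoc)

lemma of_digits_wrap_less_iff:
  assumes "length x = l" "length y = l" "is_vertex k x" "is_vertex k y" "b < k" "b' < k"
  shows "of_digits k (a # x @ [b]) < of_digits k (a' # y @ [b'])
    \<longleftrightarrow> a < a' \<or> a = a' \<and> (of_digits k x < of_digits k y \<or> of_digits k x = of_digits k y \<and> b < b')"
proof -
  have x_low: "k * of_digits k x + b < k ^ Suc l" and y_low: "k * of_digits k y + b' < k ^ Suc l"
    using assms of_digits_less mult_add_less_power by metis+
  have "k * of_digits k x + b < k * of_digits k y + b'
      \<longleftrightarrow> of_digits k x < of_digits k y \<or> of_digits k x = of_digits k y \<and> b < b'"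
    using lex_mult_add_less_iff[of b k b' "of_digits k x" "of_digits k y"] assms(5,6)
    by (simp add: mult.commute)
  then show ?thesis
    unfolding of_digits_wrap using lex_mult_add_less_iff[OF x_low y_low, of a a'] assms(1,2) by simp
qed

text \<open>
  The two kinds of words \<open>a x b\<close> of \<open>wrap_words\<close> below, seen through the numeric values
  \<open>X\<close>, \<open>RX\<close> of \<open>x\<close> and \<open>rev x\<close>, with \<open>tx\<close> standing for \<open>x \<in> T\<close>: the order of \<open>a x b\<close> is the lexicographic order of
  \<open>(a, X, b)\<close>, that of its reversal the lexicographic order of \<open>(b, RX, a)\<close>.
\<close>

lemma lex_order_reversed:
  fixes a b a' b' X Y RX RY k :: nat
  assumes less: "a < a' \<or> a = a' \<and> (X < Y \<or> X = Y \<and> b < b')"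
    and x: "(tx \<and> a + b = k - 1 \<and> 0 < X \<and> 0 < RX) \<or> (X = 0 \<and> RX = 0 \<and> a + b = k)"
    and y: "(ty \<and> a' + b' = k - 1 \<and> 0 < Y \<and> 0 < RY) \<or> (Y = 0 \<and> RY = 0 \<and> a' + b' = k)"
    and reversed: "X < Y \<Longrightarrow> tx \<Longrightarrow> ty \<Longrightarrow> RY < RX"
    and "k \<ge> 2"
  shows "b' < b \<or> b' = b \<and> (RY < RX \<or> RY = RX \<and> a' < a)"
  using x y
proof (elim disjE conjE)
  assume "tx" "a + b = k - 1" "ty" "a' + b' = k - 1"
  then show ?thesis using less reversed by auto
qed (use less \<open>k \<ge> 2\<close> in auto)

text \<open>
  The positivity of the values of \<open>w\<close> and \<open>rev w\<close> puts the words of a reversal chain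
  strictly above the all-zero word, which \<open>wrap_words\<close> needs.
\<close>

definition reversal_chain :: "nat \<Rightarrow> nat \<Rightarrow> nat list set \<Rightarrow> bool" where
  "reversal_chain k l T \<longleftrightarrow> finite T \<and>
     (\<forall>w\<in>T. length w = l \<and> is_vertex k w \<and> 0 < of_digits k w \<and> 0 < of_digits k (rev w)) \<and>
     (\<forall>u\<in>T. \<forall>w\<in>T. of_digits k u < of_digits k w \<longrightarrow> of_digits k (rev w) < of_digits k (rev u))"

definition wrap_words :: "nat \<Rightarrow> nat \<Rightarrow> nat list set \<Rightarrow> nat list set" where
  "wrap_words k l T = (\<lambda>(a, w). a # w @ [k - 1 - a]) ` ({..<k} \<times> T)
     \<union> (\<lambda>a. Suc a # replicate l 0 @ [k - 1 - a]) ` {..<k - 1}"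

lemma wrap_words_cases:
  assumes "u \<in> wrap_words k l T" and "reversal_chain k l T" and "k \<ge> 2"
  obtains a x b where "u = a # x @ [b]" "a < k" "b < k" "length x = l" "is_vertex k x"
    "(x \<in> T \<and> a + b = k - 1 \<and> 0 < of_digits k x \<and> 0 < of_digits k (rev x))
       \<or> (of_digits k x = 0 \<and> of_digits k (rev x) = 0 \<and> a + b = k)"
  using assms
  by (auto simp: wrap_words_def reversal_chain_def of_digits_replicate_0 is_vertex_def
      simp flip: replicate_append_same)

lemma reversal_chain_wrap_words:
  assumes k: "k \<ge> 2" and T: "reversal_chain k l T"
  shows "reversal_chain k (Suc (Suc l)) (wrap_words k l T)"
proof -
  have T_reversed: "of_digits k (rev y) < of_digits k (rev x)"
    if "of_digits k x < of_digits k y" "x \<in> T" "y \<in> T" for x y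
    using T that by (auto simp: reversal_chain_def)
  have "0 < of_digits k u \<and> 0 < of_digits k (rev u)"
    and "length u = Suc (Suc l) \<and> is_vertex k u" if u_in: "u \<in> wrap_words k l T" for u
  proof -
    obtain a x b where u: "u = a # x @ [b]" "length x = l" "is_vertex k x" "a < k" "b < k"
      and "(x \<in> T \<and> a + b = k - 1 \<and> 0 < of_digits k x \<and> 0 < of_digits k (rev x))
       \<or> (of_digits k x = 0 \<and> of_digits k (rev x) = 0 \<and> a + b = k)"
      using wrap_words_cases[OF u_in T k] by metis
    then have "0 < a * k ^ Suc l + (k * of_digits k x + b)"
      and "0 < b * k ^ Suc l + (k * of_digits k (rev x) + a)"
      using k by auto
    moreover have "of_digits k u = a * k ^ Suc l + (k * of_digits k x + b)"
      and "of_digits k (rev u) = b * k ^ Suc l + (k * of_digits k (rev x) + a)"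
      using u by (simp_all add: of_digits_snoc)
    ultimately show "0 < of_digits k u \<and> 0 < of_digits k (rev u)"
      by simp
    show "length u = Suc (Suc l) \<and> is_vertex k u"
      using u by (simp add: is_vertex_def)
  qed
  moreover have "of_digits k (rev w) < of_digits k (rev u)"
    if u_in: "u \<in> wrap_words k l T" and w_in: "w \<in> wrap_words k l T"
      and less: "of_digits k u < of_digits k w" for u w
  proof -
    obtain a x b where u: "u = a # x @ [b]" "length x = l" "is_vertex k x" "a < k" "b < k"
      and x: "(x \<in> T \<and> a + b = k - 1 \<and> 0 < of_digits k x \<and> 0 < of_digits k (rev x))
       \<or> (of_digits k x = 0 \<and> of_digits k (rev x) = 0 \<and> a + b = k)"
      using wrap_words_cases[OF u_in T k] by metis
    obtain a' y b' where w: "w = a' # y @ [b']" "length y = l" "is_vertex k y" "a' < k" "b' < k"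
      and y: "(y \<in> T \<and> a' + b' = k - 1 \<and> 0 < of_digits k y \<and> 0 < of_digits k (rev y))
       \<or> (of_digits k y = 0 \<and> of_digits k (rev y) = 0 \<and> a' + b' = k)"
      using wrap_words_cases[OF w_in T k] by metis
    have "rev u = b # rev x @ [a]" "rev w = b' # rev y @ [a']"
      using u w by simp_all
    then show ?thesis
      using lex_order_reversed[OF _ x y T_reversed k] less u w
        of_digits_wrap_less_iff[of x l y k b b' a a']
        of_digits_wrap_less_iff[of "rev y" l "rev x" k a' a b' b]
      by (simp add: is_vertex_def)
  qed
  moreover have "finite (wrap_words k l T)"
    using T by (simp add: wrap_words_def reversal_chain_def)
  ultimately show ?thesis
    by (auto simp: reversal_chain_def)
qed

lemma card_wrap_words:
  assumes "finite T"
  shows "card (wrap_words k l T) = k * card T + (k - 1)"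
proof -
  have "card ((\<lambda>(a, w). a # w @ [k - 1 - a]) ` ({..<k} \<times> T)) = k * card T"
    by (subst card_image) (auto simp: inj_on_def card_cartesian_product)
  moreover have "card ((\<lambda>a. Suc a # replicate l 0 @ [k - 1 - a]) ` {..<k - 1}) = k - 1"
    by (subst card_image) (auto simp: inj_on_def)
  ultimately show ?thesis
    unfolding wrap_words_def using assms by (subst card_Un_disjoint) auto
qed

fun chain_words :: "nat \<Rightarrow> nat \<Rightarrow> nat list set" where
  "chain_words k 0 = {}"
| "chain_words k (Suc 0) = {[k - 1]}"
| "chain_words k (Suc (Suc 0)) = (\<lambda>a. [a, k - 1 - a]) ` {..<k}"
| "chain_words k (Suc (Suc (Suc n))) = wrap_words k (Suc n) (chain_words k (Suc n))"

lemma reversal_chain_pairs: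
  assumes "k \<ge> 2"
  shows "reversal_chain k 2 ((\<lambda>a. [a, k - 1 - a]) ` {..<k})"
proof -
  have "0 < a * k + (k - 1 - a) \<and> 0 < (k - 1 - a) * k + a" if "a < k" for a
  proof (cases "a = 0")
    case False
    with assms have "0 < a * k" by simp
    with False show ?thesis by simp
  qed (use assms in simp)
  moreover have "(k - 1 - a') * k + a' < (k - 1 - a) * k + a"
    if "a < k" "a' < k" "a * k + (k - 1 - a) < a' * k + (k - 1 - a')" for a a'
    using that lex_mult_add_less_iff[of "k - 1 - a" k "k - 1 - a'" a a']
      lex_mult_add_less_iff[of a' k a "k - 1 - a'" "k - 1 - a"]
    by auto
  ultimately show ?thesis
    by (auto simp: reversal_chain_def is_vertex_def)
qed

lemma reversal_chain_chain_words:
  assumes "k \<ge> 2" and "l \<ge> 1"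
  shows "reversal_chain k l (chain_words k l)"
  using assms
proof (induction k l rule: chain_words.induct)
  case (2 k)
  then show ?case by (auto simp: reversal_chain_def is_vertex_def)
next
  case (3 k)
  then show ?case using reversal_chain_pairs by (simp add: numeral_2_eq_2)
next
  case (4 k n)
  then show ?case using reversal_chain_wrap_words by simp
qed auto

lemma card_chain_words:
  assumes "k \<ge> 2" and "l \<ge> 1"
  shows "(even l \<longrightarrow> int (card (chain_words k l)) = (int k + 1) * int k ^ (l div 2 - 1) - 1) \<and>
         (odd l \<longrightarrow> int (card (chain_words k l)) = 2 * int k ^ ((l - 1) div 2) - 1)"
  using assms
proof (induction k l rule: chain_words.induct)
  case (3 k)
  then show ?case by (simp add: card_image inj_on_def)
next
  case (4 k n)
  have "finite (chain_words k (Suc n))"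
    using reversal_chain_chain_words[of k "Suc n"] 4 by (simp add: reversal_chain_def)
  then have step: "int (card (chain_words k (Suc (Suc (Suc n)))))
      = int k * int (card (chain_words k (Suc n))) + int k - 1"
    using 4 by (simp add: card_wrap_words of_nat_diff)
  show ?case
  proof (intro conjI impI)
    assume "even (Suc (Suc (Suc n)))"
    then have prev: "int (card (chain_words k (Suc n))) = (int k + 1) * int k ^ (Suc n div 2 - 1) - 1"
      and exponent: "Suc (Suc (Suc n)) div 2 - 1 = Suc (Suc n div 2 - 1)"
      using 4 by auto
    show "int (card (chain_words k (Suc (Suc (Suc n)))))
        = (int k + 1) * int k ^ (Suc (Suc (Suc n)) div 2 - 1) - 1"
      unfolding step prev exponent by (simp add: algebra_simps)
  next
    assume "odd (Suc (Suc (Suc n)))"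
    then have prev: "int (card (chain_words k (Suc n))) = 2 * int k ^ ((Suc n - 1) div 2) - 1"
      using 4 by auto
    show "int (card (chain_words k (Suc (Suc (Suc n)))))
        = 2 * int k ^ ((Suc (Suc (Suc n)) - 1) div 2) - 1"
      unfolding step prev by (simp add: algebra_simps)
  qed
qed auto

subsection \<open>The lower bound\<close>

lemma lds_finite:
  fixes n :: nat and s :: "nat \<Rightarrow> nat"
  shows "finite {card I |I. I \<subseteq> {..<n} \<and> (\<forall>i\<in>I. \<forall>j\<in>I. i < j \<longrightarrow> s j < s i)}"
  by (rule finite_subset[of _ "card ` Pow {..<n}"]) auto

lemma card_le_lds:
  assumes "I \<subseteq> {..<n}" and "\<forall>i\<in>I. \<forall>j\<in>I. i < j \<longrightarrow> s j < s i"
  shows "card I \<le> lds n s"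
  unfolding lds_def using assms by (intro Max_ge[OF lds_finite]) blast

lemma lds_le: "lds n s \<le> n"
  unfolding lds_def
proof (rule Max.boundedI[OF lds_finite])
  fix x
  assume "x \<in> {card I |I. I \<subseteq> {..<n} \<and> (\<forall>i\<in>I. \<forall>j\<in>I. i < j \<longrightarrow> s j < s i)}"
  then show "x \<le> n"
    using card_mono[of "{..<n}"] by fastforce
qed blast

lemma lds_le_D:
  assumes "reachable k l C" and "stable k C"
  shows "lds (k ^ l) (perm_of k l C) \<le> D k l"
  unfolding D_def
proof (rule Max_ge)
  show "finite {lds (k ^ l) (perm_of k l C) |C. reachable k l C \<and> stable k C}"
    by (rule finite_subset[of _ "{..k ^ l}"]) (auto simp: lds_le)
qed (use assms in blast)

lemma reachable_stable_digit_reversal: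
  fixes k l :: nat
  assumes "k \<ge> 2"
  defines "C \<equiv> reversal_config k l [] 1 1 (init_config k l)"
  shows "reachable k l C" and "stable k C"
    and "\<And>w. length w = l \<Longrightarrow> is_vertex k w \<Longrightarrow> perm_of k l C (of_digits k w) = 1 + of_digits k (rev w)"
proof -
  have "init_config k l [] = (\<lambda>y. 1 + 1 * y) ` {..<k ^ l}"
    by (simp add: init_config_def image_Suc_lessThan)
  then show "reachable k l C"
    unfolding reachable_def C_def using assms
    by (intro reversal_config_reachable) (auto simp: is_vertex_def init_config_def)
  have C: "C w = (if length w = l \<and> is_vertex k w then {1 + of_digits k (rev w)} else {})" for w
    by (simp add: C_def reversal_config_def)
  then show "stable k C"
    using assms by (auto simp: stable_def)
  show "perm_of k l C (of_digits k w) = 1 + of_digits k (rev w)"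
    if "length w = l" "is_vertex k w" for w
    using that layer_vertex_of_digits[of k w] by (simp add: perm_of_def C)
qed

lemma card_reversal_chain_le_D:
  assumes "k \<ge> 2" and T: "reversal_chain k l T"
  shows "card T \<le> D k l"
proof -
  define C where "C = reversal_config k l [] 1 1 (init_config k l)"
  have T_words: "length w = l" "is_vertex k w" if "w \<in> T" for w
    using T that by (auto simp: reversal_chain_def)
  have perm: "perm_of k l C (of_digits k w) = 1 + of_digits k (rev w)" if "w \<in> T" for w
    unfolding C_def using assms(1) T_words[OF that] by (rule reachable_stable_digit_reversal(3))
  have "inj_on (of_digits k) T"
    by (metis T_words(1) inj_onI layer_vertex_of_digits T_words(2))
  then have "card T = card (of_digits k ` T)"
    by (simp add: card_image)
  also have "\<dots> \<le> lds (k ^ l) (perm_of k l C)"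
  proof (rule card_le_lds)
    show "of_digits k ` T \<subseteq> {..<k ^ l}"
      using T_words of_digits_less by fastforce
    show "\<forall>i\<in>of_digits k ` T. \<forall>j\<in>of_digits k ` T. i < j \<longrightarrow> perm_of k l C j < perm_of k l C i"
      using T perm by (auto simp: reversal_chain_def)
  qed
  also have "\<dots> \<le> D k l"
    using reachable_stable_digit_reversal[OF assms(1)] by (intro lds_le_D) (simp_all add: C_def)
  finally show ?thesis .
qed

theorem proposition8p1:
  fixes k l :: nat
  assumes "k \<ge> 2" and "l \<ge> 1"
  shows "(even l \<longrightarrow> int (D k l) \<ge> (int k + 1) * int k ^ (l div 2 - 1) - 1) \<and>
         (odd l \<longrightarrow> int (D k l) \<ge> 2 * int k ^ ((l - 1) div 2) - 1)"
proof -
  have "card (chain_words k l) \<le> D k l"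
    using card_reversal_chain_le_D reversal_chain_chain_words assms by blast
  then show ?thesis
    using card_chain_words[OF assms] by linarith
qed

end
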